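(* Let $n \geq 3$ and let $(\lambda(1),\dots,\lambda(n))$ be Kerov's growth process. Let $X_n = c(x)$, where $x$ is the box added to $\lambda(n-1)$ to obtain $\lambda(n)$, and let $T_{n-1} = \frac{\sqrt{\binom{n-1}{2}}\,\chi^{\lambda(n-1)}((12))}{\dim(\lambda(n-1))} = \binom{n-1}{2}^{-1/2}\sum_{y\in\lambda(n-1)} c(y)$. Then \begin{enumerate} \item $\mathbb{E}(|X_n|^3) \leq (n-1)\sqrt{2n-3}$; \item $\mathbb{E}(|T_{n-1}|\,|X_n|^3) \leq (n-1)\sqrt{2n-3}$. \end{enumerate}
   Context: For a partition $\mu$, $\dim(\mu)$ is the dimension of the irreducible representation of the symmetric group indexed by $\mu$ and $\chi^\mu$ its character. Kerov's growth process is the Markov chain $(\lambda(1),\dots,\lambda(n))$ where $\lambda(1)$ is the unique partition of $1$ and, given $\lambda(j)$, the partition $\lambda(j+1)$ of $j+1$ is chosen with probability $\frac{\dim(\lambda(j+1))}{(j+1)\dim(\lambda(j))}$ if $\lambda(j+1)$ is obtained from $\lambda(j)$ by adding a single box, and probability $0$ otherwise; each $\lambda(j)$ is then Plancherel distributed on partitions of $j$. The content of a box $x$ is $c(x) = (\text{column number of } x) - (\text{row number of } x)$. *)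

theory Defs
  imports Complex_Main "HOL-Library.FuncSet"
begin

definition is_partition :: "nat list \<Rightarrow> bool" where
  "is_partition xs \<longleftrightarrow> sorted_wrt (\<ge>) xs \<and> 0 \<notin> set xs"

definition partitions_of :: "nat \<Rightarrow> nat list set" where
  "partitions_of m = {xs. is_partition xs \<and> sum_list xs = m}"

text \<open>Young diagram: box (i,j) in row i, column j (0-indexed; contents are
  unaffected by the index shift).\<close>
definition cells :: "nat list \<Rightarrow> (nat \<times> nat) set" where
  "cells lam = {(i, j). i < length lam \<and> j < lam ! i}"

definition content :: "nat \<times> nat \<Rightarrow> int" where
  "content x = int (snd x) - int (fst x)"

definition adds_box :: "nat list \<Rightarrow> nat list \<Rightarrow> bool" where
  "adds_box lam mu \<longleftrightarrow> (\<exists>x. x \<notin> cells lam \<and> cells mu = insert x (cells lam))"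

definition added_box :: "nat list \<Rightarrow> nat list \<Rightarrow> nat \<times> nat" where
  "added_box lam mu = (THE x. x \<in> cells mu - cells lam)"

text \<open>dim(mu): dimension of the irreducible S_n-representation indexed by mu,
  i.e. the number of standard Young tableaux of shape mu.\<close>
definition SYT :: "nat list \<Rightarrow> ((nat \<times> nat) \<Rightarrow> nat) set" where
  "SYT mu = {f. f \<in> cells mu \<rightarrow>\<^sub>E {1..card (cells mu)} \<and>
     bij_betw f (cells mu) {1..card (cells mu)} \<and>
     (\<forall>i j. (i, Suc j) \<in> cells mu \<longrightarrow> f (i, j) < f (i, Suc j)) \<and>
     (\<forall>i j. (Suc i, j) \<in> cells mu \<longrightarrow> f (i, j) < f (Suc i, j))}"

definition dim :: "nat list \<Rightarrow> nat" where
  "dim mu = card (SYT mu)"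

text \<open>Kerov's growth process of length n: a path is a list ps with
  ps ! k = lambda(k+1) a partition of k+1; its probability is the product of
  transition probabilities dim(lambda(j+1)) / ((j+1) dim(lambda(j))).\<close>
definition kerov_paths :: "nat \<Rightarrow> nat list list set" where
  "kerov_paths n = {ps. length ps = n \<and> (\<forall>k<n. ps ! k \<in> partitions_of (Suc k))}"

definition kerov_prob :: "nat list list \<Rightarrow> real" where
  "kerov_prob ps = (\<Prod>k<length ps - 1.
     (if adds_box (ps ! k) (ps ! Suc k)
      then real (dim (ps ! Suc k)) / (real (k + 2) * real (dim (ps ! k)))
      else 0))"

definition kerov_expect :: "nat \<Rightarrow> (nat list list \<Rightarrow> real) \<Rightarrow> real" where
  "kerov_expect n g = (\<Sum>ps\<in>kerov_paths n. kerov_prob ps * g ps)"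

definition X_of :: "nat \<Rightarrow> nat list list \<Rightarrow> real" where
  "X_of n ps = real_of_int (content (added_box (ps ! (n - 2)) (ps ! (n - 1))))"

definition T_of :: "nat \<Rightarrow> nat list list \<Rightarrow> real" where
  "T_of n ps = (\<Sum>y\<in>cells (ps ! (n - 2)). real_of_int (content y))
                / sqrt (real ((n - 1) choose 2))"

end

theory Submission
  imports Defs "HOL-Analysis.Convex"
begin

text \<open>
  Given lambda(n-1) = lambda, the content X_n of the new box is distributed according to Kerov's
  transition measure, which gives an addable corner x of lambda the weight
  dim(lambda + x) / (n dim(lambda)). Its moments are controlled by the interlacing of the addable and
  removable corners of a diagram: for every function f,
    sum_(x addable) f(c(x)) - sum_(y removable) f(c(y))
      = f(0) + sum_(z in lambda) (f(c(z) + 1) + f(c(z) - 1) - 2 f(c(z))),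
  which is proved by removing one corner at a time. Together with the branching rule
  dim(mu) = sum_(y removable) dim(mu - y) this gives E(X_n^2 | lambda(n-1)) = n - 1 and, after
  averaging over the Plancherel measure, E(X_n^4) = (n - 1)(2n - 3). The same computation shows
  that the Plancherel mean of the squared content sum of lambda(n-1) is binom(n-1, 2), whence
  E(T_(n-1)^2 X_n^2) = n - 1. Both bounds then follow from the Cauchy-Schwarz inequality:
  E(|X_n|^3) <= sqrt(E(X_n^2) E(X_n^4)) and E(|T_(n-1)| |X_n|^3) <= sqrt(E(T_(n-1)^2 X_n^2) E(X_n^4)).
\<close>

section \<open>Young diagrams\<close>

definition young_diagram :: "(nat \<times> nat) set \<Rightarrow> bool" where
  "young_diagram D \<longleftrightarrow> finite D \<and>
     (\<forall>i j. (Suc i, j) \<in> D \<longrightarrow> (i, j) \<in> D) \<and> (\<forall>i j. (i, Suc j) \<in> D \<longrightarrow> (i, j) \<in> D)"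

definition addable :: "(nat \<times> nat) set \<Rightarrow> (nat \<times> nat) set" where
  "addable D = {x. x \<notin> D \<and> young_diagram (insert x D)}"

definition removable :: "(nat \<times> nat) set \<Rightarrow> (nat \<times> nat) set" where
  "removable D = {y \<in> D. young_diagram (D - {y})}"

lemma young_diagramI:
  assumes "finite D" "\<And>i j. (Suc i, j) \<in> D \<Longrightarrow> (i, j) \<in> D" "\<And>i j. (i, Suc j) \<in> D \<Longrightarrow> (i, j) \<in> D"
  shows "young_diagram D"
  using assms unfolding young_diagram_def by blast

lemma young_diagram_finite: "young_diagram D \<Longrightarrow> finite D"
  unfolding young_diagram_def by blast

lemma young_diagram_up: "young_diagram D \<Longrightarrow> (Suc i, j) \<in> D \<Longrightarrow> (i, j) \<in> D"
  unfolding young_diagram_def by blast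

lemma young_diagram_left: "young_diagram D \<Longrightarrow> (i, Suc j) \<in> D \<Longrightarrow> (i, j) \<in> D"
  unfolding young_diagram_def by blast

lemma young_diagram_empty: "young_diagram {}"
  by (rule young_diagramI) auto

lemma young_diagram_Un: "young_diagram A \<Longrightarrow> young_diagram B \<Longrightarrow> young_diagram (A \<union> B)"
  unfolding young_diagram_def by blast

lemma young_diagram_Int: "young_diagram A \<Longrightarrow> young_diagram B \<Longrightarrow> young_diagram (A \<inter> B)"
  unfolding young_diagram_def by blast

lemma young_diagram_downward:
  assumes D: "young_diagram D" and "(i, j) \<in> D" "i' \<le> i" "j' \<le> j"
  shows "(i', j') \<in> D"
proof -
  have col: "(i', j) \<in> D"
    using \<open>i' \<le> i\<close>
  proof (induction rule: inc_induct)
    case (step k)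
    then show ?case using young_diagram_up[OF D] by blast
  qed (fact \<open>(i, j) \<in> D\<close>)
  show ?thesis
    using \<open>j' \<le> j\<close>
  proof (induction rule: inc_induct)
    case (step k)
    then show ?case using young_diagram_left[OF D] by blast
  qed (fact col)
qed

lemma addable_iff:
  assumes D: "young_diagram D"
  shows "(i, j) \<in> addable D \<longleftrightarrow>
    (i, j) \<notin> D \<and> (\<forall>i'. i = Suc i' \<longrightarrow> (i', j) \<in> D) \<and> (\<forall>j'. j = Suc j' \<longrightarrow> (i, j') \<in> D)"
    (is "_ \<longleftrightarrow> _ \<and> ?up \<and> ?left")
proof
  assume "(i, j) \<in> addable D"
  then have "(i, j) \<notin> D" and D': "young_diagram (insert (i, j) D)"
    unfolding addable_def by auto
  moreover have ?up
  proof (intro allI impI)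
    fix i' assume "i = Suc i'"
    then show "(i', j) \<in> D" using young_diagram_up[OF D', of i' j] \<open>(i, j) \<notin> D\<close> by auto
  qed
  moreover have ?left
  proof (intro allI impI)
    fix j' assume "j = Suc j'"
    then show "(i, j') \<in> D" using young_diagram_left[OF D', of i j'] \<open>(i, j) \<notin> D\<close> by auto
  qed
  ultimately show "(i, j) \<notin> D \<and> ?up \<and> ?left" by blast
next
  assume R: "(i, j) \<notin> D \<and> ?up \<and> ?left"
  have "young_diagram (insert (i, j) D)"
  proof (rule young_diagramI)
    show "finite (insert (i, j) D)" using young_diagram_finite[OF D] by simp
  next
    fix a b assume "(Suc a, b) \<in> insert (i, j) D"
    then show "(a, b) \<in> insert (i, j) D" using R young_diagram_up[OF D] by auto
  next
    fix a b assume "(a, Suc b) \<in> insert (i, j) D"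
    then show "(a, b) \<in> insert (i, j) D" using R young_diagram_left[OF D] by auto
  qed
  then show "(i, j) \<in> addable D" using R unfolding addable_def by blast
qed

lemma removable_iff:
  assumes D: "young_diagram D"
  shows "(i, j) \<in> removable D \<longleftrightarrow> (i, j) \<in> D \<and> (i, Suc j) \<notin> D \<and> (Suc i, j) \<notin> D"
proof
  assume "(i, j) \<in> removable D"
  then have "(i, j) \<in> D" and D': "young_diagram (D - {(i, j)})"
    unfolding removable_def by auto
  moreover have "(i, Suc j) \<notin> D"
    using young_diagram_left[OF D', of i j] by auto
  moreover have "(Suc i, j) \<notin> D"
    using young_diagram_up[OF D', of i j] by auto
  ultimately show "(i, j) \<in> D \<and> (i, Suc j) \<notin> D \<and> (Suc i, j) \<notin> D" by blast
next
  assume R: "(i, j) \<in> D \<and> (i, Suc j) \<notin> D \<and> (Suc i, j) \<notin> D"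
  have "young_diagram (D - {(i, j)})"
  proof (rule young_diagramI)
    show "finite (D - {(i, j)})" using young_diagram_finite[OF D] by simp
  next
    fix a b assume "(Suc a, b) \<in> D - {(i, j)}"
    then show "(a, b) \<in> D - {(i, j)}" using R young_diagram_up[OF D] by auto
  next
    fix a b assume "(a, Suc b) \<in> D - {(i, j)}"
    then show "(a, b) \<in> D - {(i, j)}" using R young_diagram_left[OF D] by auto
  qed
  then show "(i, j) \<in> removable D" using R unfolding removable_def by blast
qed

lemma finite_addable:
  assumes D: "young_diagram D"
  shows "finite (addable D)"
proof -
  have "addable D \<subseteq> insert (0, 0) (apfst Suc ` D \<union> apsnd Suc ` D)"
  proof
    fix x assume x: "x \<in> addable D"
    obtain i j where [simp]: "x = (i, j)" by fastforce
    show "x \<in> insert (0, 0) (apfst Suc ` D \<union> apsnd Suc ` D)"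
    proof (cases i)
      case (Suc i')
      then have "(i', j) \<in> D" using x addable_iff[OF D] by simp
      then show ?thesis using Suc by (auto intro!: image_eqI[where x = "(i', j)"])
    next
      case 0
      show ?thesis
      proof (cases j)
        case (Suc j')
        then have "(i, j') \<in> D" using x addable_iff[OF D] by simp
        then show ?thesis using Suc by (auto intro!: image_eqI[where x = "(i, j')"])
      qed (simp add: 0)
    qed
  qed
  then show ?thesis
    using young_diagram_finite[OF D] finite_subset by blast
qed

lemma finite_removable: "young_diagram D \<Longrightarrow> finite (removable D)"
  unfolding removable_def using young_diagram_finite by auto

lemma addable_empty: "addable {} = {(0, 0)}"
proof (intro set_eqI)
  fix x :: "nat \<times> nat"
  show "x \<in> addable {} \<longleftrightarrow> x \<in> {(0, 0)}"
    by (cases x; rename_tac i j; case_tac i; case_tac j) (auto simp: addable_iff[OF young_diagram_empty])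
qed

lemma removable_empty: "removable {} = {}"
  unfolding removable_def by simp

lemma removable_nonempty:
  assumes D: "young_diagram D" and "D \<noteq> {}"
  shows "removable D \<noteq> {}"
proof -
  define s where "s = (\<lambda>(i, j). i + j :: nat)"
  have "Max (s ` D) \<in> s ` D"
    using young_diagram_finite[OF D] \<open>D \<noteq> {}\<close> by (intro Max_in) auto
  then obtain y where y: "y \<in> D" "s y = Max (s ` D)" by auto
  have "s z \<le> s y" if "z \<in> D" for z
    using young_diagram_finite[OF D] that y by simp
  then have "y \<in> removable D"
    using D y(1) by (cases y) (fastforce simp: removable_iff s_def)
  then show ?thesis by blast
qed

lemma cells_Sigma: "cells lam = Sigma {..<length lam} (\<lambda>i. {..<lam ! i})"
  by (auto simp: cells_def)

lemma finite_cells: "finite (cells lam)"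
  unfolding cells_Sigma by auto

lemma card_cells: "card (cells lam) = sum_list lam"
proof -
  have "card (cells lam) = (\<Sum>i<length lam. lam ! i)"
    unfolding cells_Sigma by (subst card_SigmaI) auto
  then show ?thesis by (simp add: sum_list_sum_nth lessThan_atLeast0)
qed

lemma young_diagram_cells:
  assumes "is_partition lam"
  shows "young_diagram (cells lam)"
proof (rule young_diagramI[OF finite_cells])
  have "lam ! Suc i \<le> lam ! i" if "Suc i < length lam" for i
    using assms that unfolding is_partition_def by (metis Suc_lessD lessI sorted_wrt_nth_less)
  then show "(i, j) \<in> cells lam" if "(Suc i, j) \<in> cells lam" for i j
    using that unfolding cells_def by fastforce
qed (auto simp: cells_def)

lemma finite_down_closed_eq_lessThan:
  fixes S :: "nat set"
  assumes "finite S" "\<And>j j'. j \<in> S \<Longrightarrow> j' \<le> j \<Longrightarrow> j' \<in> S"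
  shows "S = {..<card S}"
proof (cases "S = {}")
  case False
  then have "S = {..Max S}"
    using assms Max_ge Max_in by blast
  then show ?thesis by (metis card_atMost lessThan_Suc_atMost)
qed simp

lemma cells_inj:
  assumes "is_partition a" "is_partition b" "cells a = cells b"
  shows "a = b"
proof -
  have rows: "{i. (i, 0) \<in> cells lam} = {..<length lam}" if "is_partition lam" for lam
    using that unfolding is_partition_def cells_def by (auto, metis gr0I nth_mem)
  have row: "{j. (i, j) \<in> cells lam} = {..<lam ! i}" if "i < length lam" for i lam
    using that unfolding cells_def by auto
  have len: "length a = length b"
    using rows[OF assms(1)] rows[OF assms(2)] assms(3) by (metis card_lessThan)
  show ?thesis
  proof (rule nth_equalityI[OF len])
    fix i assume "i < length a"
    then show "a ! i = b ! i"
      using row[of i a] row[of i b] len assms(3) by (metis card_lessThan)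
  qed
qed

lemma young_diagram_row:
  assumes D: "young_diagram D"
  shows "{j. (i, j) \<in> D} = {..<card {j. (i, j) \<in> D}}"
proof (rule finite_down_closed_eq_lessThan)
  have "{j. (i, j) \<in> D} \<subseteq> snd ` D" by force
  then show "finite {j. (i, j) \<in> D}"
    using young_diagram_finite[OF D] finite_subset by blast
qed (use young_diagram_downward[OF D] in blast)

lemma young_diagram_column:
  assumes D: "young_diagram D"
  shows "{i. (i, j) \<in> D} = {..<card {i. (i, j) \<in> D}}"
proof (rule finite_down_closed_eq_lessThan)
  have "{i. (i, j) \<in> D} \<subseteq> fst ` D" by force
  then show "finite {i. (i, j) \<in> D}"
    using young_diagram_finite[OF D] finite_subset by blast
qed (use young_diagram_downward[OF D] in blast)

lemma ex_partition_cells: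
  assumes D: "young_diagram D"
  shows "\<exists>lam. is_partition lam \<and> cells lam = D"
proof -
  define len where "len i = card {j. (i, j) \<in> D}" for i
  define rows where "rows = card {i. (i, 0) \<in> D}"
  have row: "{j. (i, j) \<in> D} = {..<len i}" for i
    unfolding len_def by (rule young_diagram_row[OF D])
  have col: "{i. (i, 0) \<in> D} = {..<rows}"
    unfolding rows_def by (rule young_diagram_column[OF D])
  have mono: "len j \<le> len i" if "i \<le> j" for i j
  proof -
    have "{k. (j, k) \<in> D} \<subseteq> {k. (i, k) \<in> D}"
      using young_diagram_downward[OF D] that by blast
    then show ?thesis using row[of i] row[of j] by simp
  qed
  define lam where "lam = map len [0..<rows]"
  have "is_partition lam"
    unfolding is_partition_def lam_def
  proof
    show "sorted_wrt (\<ge>) (map len [0..<rows])"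
      unfolding sorted_wrt_iff_nth_less by (simp add: mono)
    have "0 < len i" if "i < rows" for i
    proof -
      have "(i, 0) \<in> D" using that col by blast
      then show ?thesis using row[of i] by blast
    qed
    then show "0 \<notin> set (map len [0..<rows])" by fastforce
  qed
  moreover have "(i, j) \<in> cells lam \<longleftrightarrow> (i, j) \<in> D" for i j
  proof -
    have "(i, j) \<in> D \<Longrightarrow> i < rows"
      using young_diagram_downward[OF D, of i j i 0] col by blast
    then have "(i, j) \<in> D \<longleftrightarrow> i < rows \<and> j < len i"
      using row[of i] by blast
    then show ?thesis
      unfolding cells_def lam_def by auto
  qed
  ultimately show ?thesis by auto
qed

definition shape :: "(nat \<times> nat) set \<Rightarrow> nat list" where
  "shape D = (SOME lam. is_partition lam \<and> cells lam = D)"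

lemma shape:
  assumes "young_diagram D"
  shows "is_partition (shape D)" "cells (shape D) = D"
  using someI_ex[OF ex_partition_cells[OF assms]] unfolding shape_def by blast+

lemma shape_cells: "is_partition lam \<Longrightarrow> shape (cells lam) = lam"
  using shape[OF young_diagram_cells] cells_inj by blast

lemma partitions_of_iff: "lam \<in> partitions_of m \<longleftrightarrow> is_partition lam \<and> card (cells lam) = m"
  unfolding partitions_of_def card_cells by simp

lemma young_diagram_partitions_of: "lam \<in> partitions_of m \<Longrightarrow> young_diagram (cells lam)"
  unfolding partitions_of_iff using young_diagram_cells by blast

lemma finite_partitions_of: "finite (partitions_of m)"
proof (rule finite_subset)
  show "partitions_of m \<subseteq> {xs. set xs \<subseteq> {..m} \<and> length xs \<le> m}"
  proof
    fix xs assume "xs \<in> partitions_of m"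
    then have xs: "0 \<notin> set xs" "sum_list xs = m"
      unfolding partitions_of_def is_partition_def by auto
    have "length xs = sum_list (map (\<lambda>_. 1::nat) xs)"
      by (simp add: sum_list_triv)
    also have "\<dots> \<le> sum_list (map id xs)"
      using xs(1) by (intro sum_list_mono) (simp add: Suc_le_eq, metis gr0I)
    finally show "xs \<in> {xs. set xs \<subseteq> {..m} \<and> length xs \<le> m}"
      using xs(2) member_le_sum_list by fastforce
  qed
qed (rule finite_lists_length_le; simp)

lemma added_box_eq:
  assumes "x \<notin> cells lam" "cells mu = insert x (cells lam)"
  shows "added_box lam mu = x"
  unfolding added_box_def using assms by (intro the_equality) auto

lemma adds_box_cells:
  assumes "adds_box lam mu"
  shows "added_box lam mu \<notin> cells lam" "cells mu = insert (added_box lam mu) (cells lam)"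
  using assms added_box_eq unfolding adds_box_def by metis+

lemma sum_adds_box_eq_sum_addable:
  assumes lam: "lam \<in> partitions_of m"
  shows "(\<Sum>mu\<in>partitions_of (Suc m). if adds_box lam mu then g (cells mu) (added_box lam mu) else 0)
       = (\<Sum>x\<in>addable (cells lam). g (insert x (cells lam)) x)"
proof -
  let ?C = "cells lam"
  have C: "young_diagram ?C" "card ?C = m"
    using lam young_diagram_partitions_of unfolding partitions_of_iff by blast+
  have "(\<Sum>mu\<in>partitions_of (Suc m). if adds_box lam mu then g (cells mu) (added_box lam mu) else 0)
      = (\<Sum>mu\<in>{mu \<in> partitions_of (Suc m). adds_box lam mu}. g (cells mu) (added_box lam mu))"
    using finite_partitions_of by (simp add: sum.inter_filter)
  also have "\<dots> = (\<Sum>x\<in>addable ?C. g (insert x ?C) x)"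
  proof (rule sum.reindex_bij_witness[where j = "added_box lam" and i = "\<lambda>x. shape (insert x ?C)"])
    fix x assume x: "x \<in> addable ?C"
    then have D: "young_diagram (insert x ?C)" and "x \<notin> ?C"
      unfolding addable_def by auto
    then show "added_box lam (shape (insert x ?C)) = x"
      using added_box_eq shape(2) by blast
    have "adds_box lam (shape (insert x ?C))"
      using shape(2)[OF D] \<open>x \<notin> ?C\<close> unfolding adds_box_def by blast
    then show "shape (insert x ?C) \<in> {mu \<in> partitions_of (Suc m). adds_box lam mu}"
      using shape[OF D] \<open>x \<notin> ?C\<close> C finite_cells unfolding partitions_of_iff by auto
  next
    fix mu assume "mu \<in> {mu \<in> partitions_of (Suc m). adds_box lam mu}"
    then have mu: "is_partition mu" "adds_box lam mu"
      unfolding partitions_of_iff by auto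
    show "shape (insert (added_box lam mu) ?C) = mu"
      using adds_box_cells[OF mu(2)] shape_cells[OF mu(1)] by simp
    show "added_box lam mu \<in> addable ?C"
      using adds_box_cells[OF mu(2)] young_diagram_cells[OF mu(1)] unfolding addable_def by simp
    show "g (insert (added_box lam mu) ?C) (added_box lam mu) = g (cells mu) (added_box lam mu)"
      using adds_box_cells[OF mu(2)] by simp
  qed
  finally show ?thesis .
qed

lemma sum_adds_box_eq_sum_removable:
  assumes mu: "mu \<in> partitions_of (Suc m)"
  shows "(\<Sum>lam\<in>partitions_of m. if adds_box lam mu then g (cells lam) else 0)
       = (\<Sum>y\<in>removable (cells mu). g (cells mu - {y}))"
proof -
  let ?C = "cells mu"
  have C: "young_diagram ?C" "card ?C = Suc m"
    using mu young_diagram_partitions_of unfolding partitions_of_iff by blast+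
  have "(\<Sum>lam\<in>partitions_of m. if adds_box lam mu then g (cells lam) else 0)
      = (\<Sum>lam\<in>{lam \<in> partitions_of m. adds_box lam mu}. g (cells lam))"
    using finite_partitions_of by (simp add: sum.inter_filter)
  also have "\<dots> = (\<Sum>y\<in>removable ?C. g (?C - {y}))"
  proof (rule sum.reindex_bij_witness[where j = "\<lambda>lam. added_box lam mu" and i = "\<lambda>y. shape (?C - {y})"])
    fix y assume y: "y \<in> removable ?C"
    then have D: "young_diagram (?C - {y})" and "y \<in> ?C"
      unfolding removable_def by auto
    then show "added_box (shape (?C - {y})) mu = y"
      using added_box_eq[of y "shape (?C - {y})" mu] shape(2) by (simp add: insert_absorb)
    have "adds_box (shape (?C - {y})) mu"
      using shape(2)[OF D] \<open>y \<in> ?C\<close> unfolding adds_box_def by blast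
    then show "shape (?C - {y}) \<in> {lam \<in> partitions_of m. adds_box lam mu}"
      using shape[OF D] \<open>y \<in> ?C\<close> C finite_cells unfolding partitions_of_iff by auto
  next
    fix lam assume "lam \<in> {lam \<in> partitions_of m. adds_box lam mu}"
    then have lam: "is_partition lam" "adds_box lam mu"
      unfolding partitions_of_iff by auto
    have C_eq: "?C - {added_box lam mu} = cells lam"
      using adds_box_cells[OF lam(2)] by auto
    then show "shape (?C - {added_box lam mu}) = lam"
      using shape_cells[OF lam(1)] by simp
    show "added_box lam mu \<in> removable ?C"
      using C_eq adds_box_cells[OF lam(2)] young_diagram_cells[OF lam(1)] unfolding removable_def by simp
    show "g (?C - {added_box lam mu}) = g (cells lam)"
      using C_eq by simp
  qed
  finally show ?thesis .
qed

section \<open>Standard Young tableaux and the branching rule\<close>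

definition tableaux :: "(nat \<times> nat) set \<Rightarrow> (nat \<times> nat \<Rightarrow> nat) set" where
  "tableaux D = {f. f \<in> D \<rightarrow>\<^sub>E {1..card D} \<and> bij_betw f D {1..card D} \<and>
     (\<forall>i j. (i, Suc j) \<in> D \<longrightarrow> f (i, j) < f (i, Suc j)) \<and>
     (\<forall>i j. (Suc i, j) \<in> D \<longrightarrow> f (i, j) < f (Suc i, j))}"

definition num_tableaux :: "(nat \<times> nat) set \<Rightarrow> nat" where
  "num_tableaux D = card (tableaux D)"

lemma dim_eq_num_tableaux: "dim lam = num_tableaux (cells lam)"
  by (simp add: dim_def num_tableaux_def SYT_def tableaux_def)

lemma num_tableaux_empty: "num_tableaux {} = 1"
proof -
  have "tableaux {} = {\<lambda>_. undefined}"
    unfolding tableaux_def by (auto simp: bij_betw_def)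
  then show ?thesis unfolding num_tableaux_def by simp
qed

lemma finite_tableaux: "finite D \<Longrightarrow> finite (tableaux D)"
  by (rule finite_subset[of _ "D \<rightarrow>\<^sub>E {1..card D}"]) (auto simp: tableaux_def finite_PiE)

lemma tableau_max_removable:
  assumes D: "young_diagram D" and f: "f \<in> tableaux D" and "(i, j) \<in> D" "f (i, j) = card D"
  shows "(i, j) \<in> removable D"
proof -
  have le: "f z \<le> card D" if "z \<in> D" for z
    using f that unfolding tableaux_def by (auto dest!: PiE_mem)
  have "(i, Suc j) \<notin> D"
  proof
    assume "(i, Suc j) \<in> D"
    then have "f (i, j) < f (i, Suc j)" using f unfolding tableaux_def by blast
    then show False using le[OF \<open>(i, Suc j) \<in> D\<close>] assms(4) by simp
  qed
  moreover have "(Suc i, j) \<notin> D"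
  proof
    assume "(Suc i, j) \<in> D"
    then have "f (i, j) < f (Suc i, j)" using f unfolding tableaux_def by blast
    then show False using le[OF \<open>(Suc i, j) \<in> D\<close>] assms(4) by simp
  qed
  ultimately show ?thesis
    using removable_iff[OF D] assms(3) by blast
qed

lemma tableau_bij_remove_max:
  assumes D: "young_diagram D" and y: "y \<in> removable D" and fy: "f y = card D"
  shows "bij_betw f D {1..card D} \<longleftrightarrow> bij_betw f (D - {y}) {1..card D - 1}"
proof -
  have "y \<in> D" "card D \<ge> 1"
    using y young_diagram_finite[OF D] unfolding removable_def by (auto simp: Suc_le_eq card_gt_0_iff)
  then have "(D - {y}) \<union> {y} = D" "{1..card D - 1} \<union> {f y} = {1..card D}"
    using fy by auto
  moreover have "bij_betw f (D - {y}) {1..card D - 1} \<longleftrightarrow>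
      bij_betw f ((D - {y}) \<union> {y}) ({1..card D - 1} \<union> {f y})"
    using fy by (intro notIn_Un_bij_betw3) auto
  ultimately show ?thesis by simp
qed

lemma tableau_restrict:
  assumes D: "young_diagram D" and y: "y \<in> removable D"
    and f: "f \<in> tableaux D" and fy: "f y = card D"
  shows "restrict f (D - {y}) \<in> tableaux (D - {y})"
proof -
  let ?E = "D - {y}"
  have E: "young_diagram ?E" and card_E: "card ?E = card D - 1"
    using y young_diagram_finite[OF D] unfolding removable_def by auto
  have bij: "bij_betw f ?E {1..card ?E}"
    using f tableau_bij_remove_max[of D y f, OF D y fy] card_E unfolding tableaux_def by simp
  then have "restrict f ?E \<in> ?E \<rightarrow>\<^sub>E {1..card ?E}"
    unfolding bij_betw_def by (auto simp: PiE_iff)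
  moreover have "bij_betw (restrict f ?E) ?E {1..card ?E}"
    using bij bij_betw_cong[of ?E "restrict f ?E" f] by simp
  moreover have "restrict f ?E (i, j) < restrict f ?E (i, Suc j)" if "(i, Suc j) \<in> ?E" for i j
    using that young_diagram_left[OF E that] f unfolding tableaux_def by auto
  moreover have "restrict f ?E (i, j) < restrict f ?E (Suc i, j)" if "(Suc i, j) \<in> ?E" for i j
    using that young_diagram_up[OF E that] f unfolding tableaux_def by auto
  ultimately show ?thesis
    unfolding tableaux_def by blast
qed

lemma tableau_extend:
  assumes D: "young_diagram D" and y: "y \<in> removable D" and g: "g \<in> tableaux (D - {y})"
  shows "g(y := card D) \<in> tableaux D"
proof -
  let ?E = "D - {y}" and ?f = "g(y := card D)"
  have yD: "y \<in> D" and card_E: "card ?E = card D - 1" and N: "card D \<ge> 1"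
    using y young_diagram_finite[OF D] unfolding removable_def by (auto simp: Suc_le_eq card_gt_0_iff)
  have g_range: "g z \<in> {1..card D - 1}" if "z \<in> ?E" for z
  proof -
    have "g \<in> ?E \<rightarrow>\<^sub>E {1..card ?E}" using g unfolding tableaux_def by blast
    then show ?thesis using that card_E by (metis PiE_mem)
  qed
  have below_max: "?f z < card D" if "z \<in> D" "z \<noteq> y" for z
    using g_range[of z] that N by auto
  have "?f \<in> D \<rightarrow>\<^sub>E {1..card D}"
  proof (rule PiE_I)
    show "?f z \<in> {1..card D}" if "z \<in> D" for z
      using g_range[of z] N that by (cases "z = y") auto
    show "?f z = undefined" if "z \<notin> D" for z
      using g that yD unfolding tableaux_def PiE_def by (auto intro: extensional_arb)
  qed
  moreover have "bij_betw ?f ?E {1..card D - 1}"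
    using g card_E bij_betw_cong[of ?E ?f g] unfolding tableaux_def by simp
  then have "bij_betw ?f D {1..card D}"
    using tableau_bij_remove_max[of D y ?f] D y by simp
  moreover have "?f (i, j) < ?f (i, Suc j)" if "(i, Suc j) \<in> D" for i j
  proof -
    have "(i, j) \<in> D" "(i, j) \<noteq> y"
      using young_diagram_left[OF D that] that y removable_iff[OF D] by blast+
    then show ?thesis
      using below_max[of "(i, j)"] g young_diagram_left[OF D that] that unfolding tableaux_def by auto
  qed
  moreover have "?f (i, j) < ?f (Suc i, j)" if "(Suc i, j) \<in> D" for i j
  proof -
    have "(i, j) \<in> D" "(i, j) \<noteq> y"
      using young_diagram_up[OF D that] that y removable_iff[OF D] by blast+
    then show ?thesis
      using below_max[of "(i, j)"] g that unfolding tableaux_def by auto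
  qed
  ultimately show ?thesis
    unfolding tableaux_def by blast
qed

lemma card_tableaux_max_at:
  assumes D: "young_diagram D" and y: "y \<in> removable D"
  shows "card {f \<in> tableaux D. f y = card D} = num_tableaux (D - {y})"
proof -
  let ?E = "D - {y}"
  have yD: "y \<in> D" using y unfolding removable_def by auto
  have "bij_betw (\<lambda>f. restrict f ?E) {f \<in> tableaux D. f y = card D} (tableaux ?E)"
  proof (rule bij_betw_byWitness[where f' = "\<lambda>g. g(y := card D)"])
    show "\<forall>f\<in>{f \<in> tableaux D. f y = card D}. (restrict f ?E)(y := card D) = f"
      using yD by (auto simp: tableaux_def PiE_iff extensional_def fun_eq_iff)
    show "\<forall>g\<in>tableaux ?E. restrict (g(y := card D)) ?E = g"
      by (auto simp: tableaux_def PiE_iff extensional_def fun_eq_iff)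
    show "(\<lambda>f. restrict f ?E) ` {f \<in> tableaux D. f y = card D} \<subseteq> tableaux ?E"
      using tableau_restrict[OF D y] by auto
    show "(\<lambda>g. g(y := card D)) ` tableaux ?E \<subseteq> {f \<in> tableaux D. f y = card D}"
      using tableau_extend[OF D y] by auto
  qed
  then show ?thesis
    unfolding num_tableaux_def by (rule bij_betw_same_card)
qed

text \<open>The branching rule: sort the tableaux by the cell of their largest entry, a removable corner.\<close>

lemma num_tableaux_branching:
  assumes D: "young_diagram D" and "D \<noteq> {}"
  shows "num_tableaux D = (\<Sum>y\<in>removable D. num_tableaux (D - {y}))"
proof -
  let ?T = "\<lambda>y. {f \<in> tableaux D. f y = card D}"
  have fin: "finite D" using young_diagram_finite[OF D] .
  have "tableaux D = (\<Union>y\<in>removable D. ?T y)"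
  proof (intro set_eqI iffI)
    fix f assume f: "f \<in> tableaux D"
    have "card D \<in> f ` D"
      using f fin \<open>D \<noteq> {}\<close> unfolding tableaux_def bij_betw_def by (auto simp: card_gt_0_iff)
    then obtain i j where "(i, j) \<in> D" "f (i, j) = card D" by auto
    then show "f \<in> (\<Union>y\<in>removable D. ?T y)"
      using f tableau_max_removable[OF D f] by blast
  qed auto
  then have "num_tableaux D = card (\<Union>y\<in>removable D. ?T y)"
    unfolding num_tableaux_def by simp
  also have "\<dots> = (\<Sum>y\<in>removable D. card (?T y))"
  proof (rule card_UN_disjoint[OF finite_removable[OF D]])
    show "\<forall>y\<in>removable D. finite (?T y)"
      using finite_tableaux[OF fin] by auto
    show "\<forall>y\<in>removable D. \<forall>z\<in>removable D. y \<noteq> z \<longrightarrow> ?T y \<inter> ?T z = {}"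
    proof (intro ballI impI)
      fix y z assume "y \<in> removable D" "z \<in> removable D" "y \<noteq> z"
      then have neq: "f y \<noteq> f z" if "f \<in> tableaux D" for f
        using that unfolding removable_def tableaux_def bij_betw_def inj_on_def by blast
      show "?T y \<inter> ?T z = {}"
      proof (rule equals0I)
        fix f assume "f \<in> ?T y \<inter> ?T z"
        then show False using neq[of f] by simp
      qed
    qed
  qed
  also have "\<dots> = (\<Sum>y\<in>removable D. num_tableaux (D - {y}))"
    using card_tableaux_max_at[OF D] by simp
  finally show ?thesis .
qed

lemma num_tableaux_pos: "young_diagram D \<Longrightarrow> 0 < num_tableaux D"
proof (induction "card D" arbitrary: D)
  case 0
  then show ?case using young_diagram_finite num_tableaux_empty by fastforce
next
  case (Suc m)
  then have "D \<noteq> {}" by auto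
  then obtain y where y: "y \<in> removable D"
    using removable_nonempty[OF Suc.prems] by blast
  then have "y \<in> D" "young_diagram (D - {y})"
    unfolding removable_def by auto
  then have "0 < num_tableaux (D - {y})"
    using Suc young_diagram_finite by simp
  then show ?case
    using num_tableaux_branching[OF Suc.prems \<open>D \<noteq> {}\<close>] finite_removable[OF Suc.prems] y
    by (metis gr0I sum_eq_0_iff)
qed

section \<open>Interlacing of addable and removable corners\<close>

lemma addable_remove_corner:
  assumes D: "young_diagram D" and y: "(a, b) \<in> removable D"
  shows "addable (D - {(a, b)}) = insert (a, b) (addable D - {(a, Suc b), (Suc a, b)})"
proof -
  have D0: "young_diagram (D - {(a, b)})"
    using y unfolding removable_def by auto
  have y': "(a, b) \<in> D" "(a, Suc b) \<notin> D" "(Suc a, b) \<notin> D"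
    using y removable_iff[OF D] by auto
  show ?thesis
  proof (intro set_eqI)
    fix x :: "nat \<times> nat"
    obtain i j where x: "x = (i, j)" by fastforce
    show "x \<in> addable (D - {(a, b)}) \<longleftrightarrow> x \<in> insert (a, b) (addable D - {(a, Suc b), (Suc a, b)})"
    proof (cases "x = (a, b)")
      case True
      then show ?thesis
        using D y'(1) unfolding addable_def by (simp add: insert_absorb)
    next
      case False
      have "x \<in> addable (D - {(a, b)}) \<longleftrightarrow> x \<in> addable D \<and> x \<noteq> (a, Suc b) \<and> x \<noteq> (Suc a, b)"
        unfolding x addable_iff[OF D] addable_iff[OF D0] using False x y'(2,3) by fastforce
      then show ?thesis using False by blast
    qed
  qed
qed

text \<open>For a = 0 the cell (a - 1, b) is (a, b) itself (truncated subtraction), which is not removable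
  from D - {(a, b)}; hence no case distinction is needed, and likewise for (a, b - 1).\<close>

lemma removable_remove_corner:
  assumes D: "young_diagram D" and y: "(a, b) \<in> removable D"
  shows "removable D = insert (a, b) (removable (D - {(a, b)}) - {(a - 1, b), (a, b - 1)})"
proof -
  have D0: "young_diagram (D - {(a, b)})"
    using y unfolding removable_def by auto
  have y': "(a, b) \<in> D" "(a, Suc b) \<notin> D" "(Suc a, b) \<notin> D"
    using y removable_iff[OF D] by auto
  show ?thesis
  proof (intro set_eqI)
    fix x :: "nat \<times> nat"
    obtain i j where x: "x = (i, j)" by fastforce
    show "x \<in> removable D \<longleftrightarrow> x \<in> insert (a, b) (removable (D - {(a, b)}) - {(a - 1, b), (a, b - 1)})"
    proof (cases "x = (a, b)")
      case True
      then show ?thesis using y by simp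
    next
      case False
      have "x \<in> removable D \<longleftrightarrow> x \<in> removable (D - {(a, b)}) \<and> x \<noteq> (a - 1, b) \<and> x \<noteq> (a, b - 1)"
        unfolding x removable_iff[OF D] removable_iff[OF D0] using False x y'(1) by fastforce
      then show ?thesis using False by blast
    qed
  qed
qed

text \<open>Of the two cells (a, b + 1) and (a - 1, b), both of content c(a, b) + 1, exactly one is a corner
  after the corner (a, b) has been removed: the first an addable corner of D or the second a
  removable corner of D - {(a, b)}. Likewise for (a + 1, b) and (a, b - 1) and content c(a, b) - 1.\<close>

lemma right_or_above_corner_content:
  fixes f :: "int \<Rightarrow> 'a::monoid_add"
  assumes D: "young_diagram D" and y: "(a, b) \<in> removable D"
  shows "(if (a, Suc b) \<in> addable D then f (content (a, Suc b)) else 0)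
       + (if (a - 1, b) \<in> removable (D - {(a, b)}) then f (content (a - 1, b)) else 0)
       = f (content (a, b) + 1)"
proof -
  have D0: "young_diagram (D - {(a, b)})"
    using y unfolding removable_def by auto
  have y': "(a, b) \<in> D" "(a, Suc b) \<notin> D" "(Suc a, b) \<notin> D"
    using y removable_iff[OF D] by auto
  have "(a, Suc b) \<in> addable D \<longleftrightarrow> (a - 1, b) \<notin> removable (D - {(a, b)})"
    unfolding addable_iff[OF D] removable_iff[OF D0] using y' young_diagram_up[OF D]
    by (cases a) auto
  moreover have "0 < a" if "(a - 1, b) \<in> removable (D - {(a, b)})"
    using that unfolding removable_def by (cases a) auto
  ultimately show ?thesis
    by (auto simp: content_def algebra_simps)
qed

lemma below_or_left_corner_content:
  fixes f :: "int \<Rightarrow> 'a::monoid_add"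
  assumes D: "young_diagram D" and y: "(a, b) \<in> removable D"
  shows "(if (Suc a, b) \<in> addable D then f (content (Suc a, b)) else 0)
       + (if (a, b - 1) \<in> removable (D - {(a, b)}) then f (content (a, b - 1)) else 0)
       = f (content (a, b) - 1)"
proof -
  have D0: "young_diagram (D - {(a, b)})"
    using y unfolding removable_def by auto
  have y': "(a, b) \<in> D" "(a, Suc b) \<notin> D" "(Suc a, b) \<notin> D"
    using y removable_iff[OF D] by auto
  have "(Suc a, b) \<in> addable D \<longleftrightarrow> (a, b - 1) \<notin> removable (D - {(a, b)})"
    unfolding addable_iff[OF D] removable_iff[OF D0] using y' young_diagram_left[OF D]
    by (cases b) auto
  moreover have "0 < b" if "(a, b - 1) \<in> removable (D - {(a, b)})"
    using that unfolding removable_def by (cases b) auto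
  ultimately show ?thesis
    by (auto simp: content_def algebra_simps)
qed

definition corner_sum :: "((nat \<times> nat) \<Rightarrow> real) \<Rightarrow> (nat \<times> nat) set \<Rightarrow> real" where
  "corner_sum w D = (\<Sum>x\<in>addable D. w x) - (\<Sum>y\<in>removable D. w y)"

lemma sum_Int_doubleton:
  assumes "p = q \<Longrightarrow> p \<notin> A"
  shows "sum g (A \<inter> {p, q}) = (if p \<in> A then g p else 0) + (if q \<in> A then g q else 0)"
  using assms by (cases "p = q") (auto simp: Int_insert_right)

lemma corner_sum_remove_corner:
  fixes f :: "int \<Rightarrow> real"
  assumes D: "young_diagram D" and y: "(a, b) \<in> removable D"
  shows "corner_sum (\<lambda>x. f (content x)) D - corner_sum (\<lambda>x. f (content x)) (D - {(a, b)})
       = f (content (a, b) + 1) + f (content (a, b) - 1) - 2 * f (content (a, b))"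
proof -
  let ?g = "\<lambda>x. f (content x)" and ?D0 = "D - {(a, b)}"
  let ?S = "{(a, Suc b), (Suc a, b)}" and ?P = "{(a - 1, b), (a, b - 1)}"
  have D0: "young_diagram ?D0" and yD: "(a, b) \<in> D"
    using y unfolding removable_def by auto
  have y_not_removable: "(a, b) \<notin> removable ?D0"
    unfolding removable_def by simp
  have "sum ?g (addable ?D0) = ?g (a, b) + sum ?g (addable D - ?S)"
    unfolding addable_remove_corner[OF D y] using finite_addable[OF D] yD
    by (simp add: addable_def)
  moreover have "sum ?g (removable D) = ?g (a, b) + sum ?g (removable ?D0 - ?P)"
    using removable_remove_corner[OF D y] finite_removable[OF D0] y_not_removable
    by (metis DiffD1 finite_Diff sum.insert)
  moreover have "sum ?g (addable D) = sum ?g (addable D - ?S)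
      + ((if (a, Suc b) \<in> addable D then ?g (a, Suc b) else 0) + (if (Suc a, b) \<in> addable D then ?g (Suc a, b) else 0))"
    using sum.Int_Diff[OF finite_addable[OF D], of ?g ?S] sum_Int_doubleton[of "(a, Suc b)" "(Suc a, b)"] by simp
  moreover have "sum ?g (removable ?D0) = sum ?g (removable ?D0 - ?P)
      + ((if (a - 1, b) \<in> removable ?D0 then ?g (a - 1, b) else 0) + (if (a, b - 1) \<in> removable ?D0 then ?g (a, b - 1) else 0))"
    using sum.Int_Diff[OF finite_removable[OF D0], of ?g ?P] sum_Int_doubleton[of "(a - 1, b)" "(a, b - 1)"]
      y_not_removable by fastforce
  ultimately show ?thesis
    using right_or_above_corner_content[OF D y, of f] below_or_left_corner_content[OF D y, of f]
    unfolding corner_sum_def by (simp add: algebra_simps)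
qed

lemma corner_sum_content:
  fixes f :: "int \<Rightarrow> real"
  assumes "young_diagram D"
  shows "corner_sum (\<lambda>x. f (content x)) D
       = f 0 + (\<Sum>z\<in>D. f (content z + 1) + f (content z - 1) - 2 * f (content z))"
  using assms
proof (induction "card D" arbitrary: D)
  case 0
  then have "D = {}" using young_diagram_finite by auto
  then show ?case by (simp add: corner_sum_def addable_empty removable_empty content_def)
next
  case (Suc m)
  then obtain a b where y: "(a, b) \<in> removable D"
    using removable_nonempty by fastforce
  then have "(a, b) \<in> D" "young_diagram (D - {(a, b)})"
    unfolding removable_def by auto
  moreover have "finite D"
    using young_diagram_finite[OF Suc.prems] .
  ultimately show ?case
    using Suc corner_sum_remove_corner[OF Suc.prems y, of f] by (simp add: sum.remove)
qed

lemma addable_removable_commute: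
  assumes D: "young_diagram D" and "x \<noteq> y"
  shows "x \<in> addable D \<and> y \<in> removable (insert x D) \<longleftrightarrow> y \<in> removable D \<and> x \<in> addable (D - {y})"
proof -
  let ?M = "insert x (D - {y})"
  have "x \<in> addable D \<and> y \<in> removable (insert x D) \<longleftrightarrow> x \<notin> D \<and> y \<in> D \<and> young_diagram ?M"
  proof -
    have "insert x D - {y} = ?M" using \<open>x \<noteq> y\<close> by blast
    moreover have "young_diagram (insert x D)" if "x \<notin> D" "y \<in> D" "young_diagram ?M"
    proof -
      have "D \<union> ?M = insert x D" using that(2) by blast
      then show ?thesis using young_diagram_Un[OF D that(3)] by simp
    qed
    ultimately show ?thesis
      unfolding addable_def removable_def using \<open>x \<noteq> y\<close> by auto
  qed
  moreover have "y \<in> removable D \<and> x \<in> addable (D - {y}) \<longleftrightarrow> x \<notin> D \<and> y \<in> D \<and> young_diagram ?M"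
  proof -
    have "young_diagram (D - {y})" if "x \<notin> D" "young_diagram ?M"
    proof -
      have "D \<inter> ?M = D - {y}" using that(1) by blast
      then show ?thesis using young_diagram_Int[OF D that(2)] by simp
    qed
    then show ?thesis
      unfolding addable_def removable_def using \<open>x \<noteq> y\<close> by auto
  qed
  ultimately show ?thesis by blast
qed

section \<open>Moments of the transition measure\<close>

lemma num_tableaux_insert:
  assumes D: "young_diagram D" and x: "x \<in> addable D"
  shows "num_tableaux (insert x D)
       = num_tableaux D + (\<Sum>y\<in>removable (insert x D) - {x}. num_tableaux (insert x (D - {y})))"
proof -
  have xD: "x \<notin> D" and Dx: "young_diagram (insert x D)"
    using x unfolding addable_def by auto
  have "x \<in> removable (insert x D)"
    unfolding removable_def using xD D by simp
  then have "num_tableaux (insert x D)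
      = num_tableaux (insert x D - {x}) + (\<Sum>y\<in>removable (insert x D) - {x}. num_tableaux (insert x D - {y}))"
    using num_tableaux_branching[OF Dx] finite_removable[OF Dx] by (simp add: sum.remove)
  also have "\<dots> = num_tableaux D + (\<Sum>y\<in>removable (insert x D) - {x}. num_tableaux (insert x (D - {y})))"
    using xD by (intro arg_cong2[where f = "(+)"] sum.cong) (auto simp: insert_Diff_if)
  finally show ?thesis .
qed

text \<open>up_sum w D / ((card D + 1) * num_tableaux D) is the mean of w under the transition measure
  from D.\<close>

definition up_sum :: "((nat \<times> nat) \<Rightarrow> real) \<Rightarrow> (nat \<times> nat) set \<Rightarrow> real" where
  "up_sum w D = (\<Sum>x\<in>addable D. w x * real (num_tableaux (insert x D)))"

lemma up_sum_remove:
  assumes D: "young_diagram D" and y: "y \<in> removable D"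
  shows "up_sum w (D - {y})
       = w y * real (num_tableaux D) + (\<Sum>x\<in>addable (D - {y}) - {y}. w x * real (num_tableaux (insert x (D - {y}))))"
proof -
  have yD: "y \<in> D" and Dy: "young_diagram (D - {y})"
    using y unfolding removable_def by auto
  then have "y \<in> addable (D - {y})"
    unfolding addable_def using D by (simp add: insert_absorb)
  then show ?thesis
    unfolding up_sum_def using finite_addable[OF Dy] yD by (simp add: sum.remove insert_absorb)
qed

lemma sum_addable_removable_swap:
  assumes D: "young_diagram D"
  shows "(\<Sum>x\<in>addable D. \<Sum>y\<in>removable (insert x D) - {x}. g x y)
       = (\<Sum>y\<in>removable D. \<Sum>x\<in>addable (D - {y}) - {y}. g x y)"
proof -
  let ?R = "\<lambda>x y. x \<noteq> y \<and> x \<in> addable D \<and> y \<in> removable (insert x D)"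
  have "removable (insert x D) - {x} = {y \<in> removable D. ?R x y}" if "x \<in> addable D" for x
  proof -
    have "y \<in> removable (insert x D) - {x} \<longleftrightarrow> y \<in> removable D \<and> ?R x y" for y
      using addable_removable_commute[OF D, of x y] that by (cases "x = y") auto
    then show ?thesis by blast
  qed
  moreover have "addable (D - {y}) - {y} = {x \<in> addable D. ?R x y}" if "y \<in> removable D" for y
  proof -
    have "x \<in> addable (D - {y}) - {y} \<longleftrightarrow> x \<in> addable D \<and> ?R x y" for x
      using addable_removable_commute[OF D, of x y] that by (cases "x = y") auto
    then show ?thesis by blast
  qed
  moreover have "(\<Sum>x\<in>addable D. \<Sum>y\<in>{y \<in> removable D. ?R x y}. g x y)
      = (\<Sum>y\<in>removable D. \<Sum>x\<in>{x \<in> addable D. ?R x y}. g x y)"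
    by (rule sum.swap_restrict[OF finite_addable[OF D] finite_removable[OF D]])
  ultimately show ?thesis
    by simp
qed

text \<open>Expand num_tableaux (insert x D) by the branching rule and exchange the resulting double sum
  over pairs of an addable x and a removable y.\<close>

lemma up_sum_rec:
  assumes D: "young_diagram D"
  shows "up_sum w D = corner_sum w D * real (num_tableaux D) + (\<Sum>y\<in>removable D. up_sum w (D - {y}))"
proof -
  let ?n = "\<lambda>E. real (num_tableaux E)"
  let ?g = "\<lambda>x y. w x * ?n (insert x (D - {y}))"
  have "up_sum w D = (\<Sum>x\<in>addable D. w x * ?n D + (\<Sum>y\<in>removable (insert x D) - {x}. ?g x y))"
    unfolding up_sum_def using num_tableaux_insert[OF D]
    by (intro sum.cong refl) (simp add: distrib_left sum_distrib_left)
  also have "\<dots> = (\<Sum>x\<in>addable D. w x) * ?n D + (\<Sum>y\<in>removable D. \<Sum>x\<in>addable (D - {y}) - {y}. ?g x y)"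
    by (simp add: sum.distrib sum_distrib_right sum_addable_removable_swap[OF D])
  also have "(\<Sum>y\<in>removable D. \<Sum>x\<in>addable (D - {y}) - {y}. ?g x y)
      = (\<Sum>y\<in>removable D. up_sum w (D - {y}) - w y * ?n D)"
    using up_sum_remove[OF D] by (intro sum.cong) auto
  finally have "up_sum w D = (\<Sum>x\<in>addable D. w x) * ?n D - (\<Sum>y\<in>removable D. w y) * ?n D
      + (\<Sum>y\<in>removable D. up_sum w (D - {y}))"
    by (simp add: sum_subtractf sum_distrib_right)
  then show ?thesis
    unfolding corner_sum_def by (simp add: algebra_simps)
qed

lemma up_sum_closed_form:
  assumes P: "\<And>E. young_diagram E \<Longrightarrow> corner_sum w E = P (card E)"
    and D: "young_diagram D"
  shows "up_sum w D = (\<Sum>k\<le>card D. P k) * real (num_tableaux D)"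
  using D
proof (induction "card D" arbitrary: D)
  case 0
  then have "D = {}" using young_diagram_finite by auto
  then show ?case
    using up_sum_rec[OF young_diagram_empty, of w] P[OF young_diagram_empty] by (simp add: removable_empty)
next
  case (Suc m)
  have IH: "up_sum w (D - {y}) = (\<Sum>k\<le>m. P k) * real (num_tableaux (D - {y}))" if "y \<in> removable D" for y
    using that Suc.hyps(1)[of "D - {y}"] Suc.hyps(2)[symmetric] young_diagram_finite[OF Suc.prems]
    unfolding removable_def by auto
  have "D \<noteq> {}" using Suc.hyps(2) by auto
  then have "(\<Sum>y\<in>removable D. up_sum w (D - {y})) = (\<Sum>k\<le>m. P k) * real (num_tableaux D)"
    using num_tableaux_branching[OF Suc.prems] IH by (simp add: sum_distrib_left)
  then show ?case
    using up_sum_rec[OF Suc.prems, of w] P[OF Suc.prems] Suc.hyps(2)[symmetric] by (simp add: algebra_simps)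
qed

abbreviation rcontent :: "nat \<times> nat \<Rightarrow> real" where
  "rcontent x \<equiv> real_of_int (content x)"

lemma corner_sum_one: "young_diagram E \<Longrightarrow> corner_sum (\<lambda>_. 1) E = 1"
  using corner_sum_content[of E "\<lambda>_. 1"] by simp

lemma corner_sum_rcontent: "young_diagram E \<Longrightarrow> corner_sum rcontent E = 0"
  using corner_sum_content[of E real_of_int] by simp

lemma corner_sum_rcontent_sq: "young_diagram E \<Longrightarrow> corner_sum (\<lambda>x. rcontent x ^ 2) E = 2 * real (card E)"
  using corner_sum_content[of E "\<lambda>c. real_of_int c ^ 2"] by (simp add: power2_eq_square algebra_simps)

lemma corner_sum_rcontent_pow4:
  "young_diagram E \<Longrightarrow> corner_sum (\<lambda>x. rcontent x ^ 4) E = 12 * (\<Sum>z\<in>E. rcontent z ^ 2) + 2 * real (card E)"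
  using corner_sum_content[of E "\<lambda>c. real_of_int c ^ 4"]
  by (simp add: power2_eq_square power4_eq_xxxx algebra_simps sum.distrib sum_distrib_left)

lemma up_sum_one: "young_diagram D \<Longrightarrow> up_sum (\<lambda>_. 1) D = real (card D + 1) * real (num_tableaux D)"
  using up_sum_closed_form[of "\<lambda>_. 1" "\<lambda>_. 1" D] corner_sum_one by simp

lemma up_sum_rcontent: "young_diagram D \<Longrightarrow> up_sum rcontent D = 0"
  using up_sum_closed_form[of rcontent "\<lambda>_. 0" D] corner_sum_rcontent by simp

lemma up_sum_rcontent_sq:
  assumes "young_diagram D"
  shows "up_sum (\<lambda>x. rcontent x ^ 2) D = real (card D) * (real (card D) + 1) * real (num_tableaux D)"
proof -
  have "(\<Sum>k\<le>n. 2 * real k) = real n * (real n + 1)" for n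
    by (induction n) (simp_all add: algebra_simps)
  then show ?thesis
    using up_sum_closed_form[of "\<lambda>x. rcontent x ^ 2" "\<lambda>k. 2 * real k" D] corner_sum_rcontent_sq assms by simp
qed

section \<open>The Plancherel measure\<close>

definition transition :: "nat \<Rightarrow> nat list \<Rightarrow> nat list \<Rightarrow> real" where
  "transition m lam mu = (if adds_box lam mu then real (dim mu) / (real (m + 1) * real (dim lam)) else 0)"

definition plancherel_mean :: "nat \<Rightarrow> (nat list \<Rightarrow> real) \<Rightarrow> real" where
  "plancherel_mean m h = (\<Sum>lam\<in>partitions_of m. real (dim lam) ^ 2 / fact m * h lam)"

lemma dim_pos: "lam \<in> partitions_of m \<Longrightarrow> 0 < dim lam"
  unfolding dim_eq_num_tableaux using num_tableaux_pos young_diagram_partitions_of by blast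

lemma partitions_of_0: "partitions_of 0 = {[]}"
proof -
  have "xs = []" if "sum_list xs = (0::nat)" "0 \<notin> set xs" for xs
    using that by (cases xs) auto
  then show ?thesis
    unfolding partitions_of_def is_partition_def by auto
qed

lemma dim_Nil: "dim [] = 1"
  using num_tableaux_empty by (simp add: dim_eq_num_tableaux cells_def)

lemma plancherel_mean_0: "plancherel_mean 0 h = h []"
  by (simp add: plancherel_mean_def partitions_of_0 dim_Nil)

lemma plancherel_mean_cong:
  "(\<And>lam. lam \<in> partitions_of m \<Longrightarrow> f lam = g lam) \<Longrightarrow> plancherel_mean m f = plancherel_mean m g"
  unfolding plancherel_mean_def by (intro sum.cong) auto

lemma plancherel_mean_add: "plancherel_mean m (\<lambda>lam. f lam + g lam) = plancherel_mean m f + plancherel_mean m g"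
  unfolding plancherel_mean_def by (simp add: distrib_left sum.distrib)

lemma plancherel_mean_cmult: "plancherel_mean m (\<lambda>lam. c * f lam) = c * plancherel_mean m f"
  unfolding plancherel_mean_def by (simp add: sum_distrib_left algebra_simps)

lemma sum_transition_eq_up_sum:
  assumes lam: "lam \<in> partitions_of m"
  shows "(\<Sum>mu\<in>partitions_of (Suc m). transition m lam mu * w (added_box lam mu))
       = up_sum w (cells lam) / (real (m + 1) * real (dim lam))"
proof -
  let ?F = "\<lambda>D x. w x * real (num_tableaux D) / (real (m + 1) * real (dim lam))"
  have "(\<Sum>mu\<in>partitions_of (Suc m). transition m lam mu * w (added_box lam mu))
      = (\<Sum>mu\<in>partitions_of (Suc m). if adds_box lam mu then ?F (cells mu) (added_box lam mu) else 0)"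
    unfolding transition_def by (intro sum.cong refl) (simp add: dim_eq_num_tableaux)
  also have "\<dots> = (\<Sum>x\<in>addable (cells lam). ?F (insert x (cells lam)) x)"
    by (rule sum_adds_box_eq_sum_addable[OF lam])
  finally show ?thesis
    unfolding up_sum_def by (simp add: sum_divide_distrib)
qed

lemma sum_transition:
  assumes lam: "lam \<in> partitions_of m"
  shows "(\<Sum>mu\<in>partitions_of (Suc m). transition m lam mu) = 1"
  using sum_transition_eq_up_sum[OF lam, of "\<lambda>_. 1"] up_sum_one[OF young_diagram_partitions_of[OF lam]]
    dim_pos[OF lam] lam by (simp add: partitions_of_iff dim_eq_num_tableaux)

lemma transition_mean_rcontent:
  assumes lam: "lam \<in> partitions_of m"
  shows "(\<Sum>mu\<in>partitions_of (Suc m). transition m lam mu * rcontent (added_box lam mu)) = 0"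
  using sum_transition_eq_up_sum[OF lam, of rcontent] up_sum_rcontent[OF young_diagram_partitions_of[OF lam]]
  by simp

lemma transition_mean_rcontent_sq:
  assumes lam: "lam \<in> partitions_of m"
  shows "(\<Sum>mu\<in>partitions_of (Suc m). transition m lam mu * rcontent (added_box lam mu) ^ 2) = real m"
  using sum_transition_eq_up_sum[OF lam, of "\<lambda>x. rcontent x ^ 2"]
    up_sum_rcontent_sq[OF young_diagram_partitions_of[OF lam]] dim_pos[OF lam] lam
  by (simp add: partitions_of_iff dim_eq_num_tableaux add.commute)

lemma sum_dim_adds_box:
  assumes mu: "mu \<in> partitions_of (Suc m)"
  shows "(\<Sum>lam\<in>partitions_of m. if adds_box lam mu then real (dim lam) else 0) = real (dim mu)"
proof -
  have "cells mu \<noteq> {}"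
    using mu unfolding partitions_of_iff by auto
  have "(\<Sum>lam\<in>partitions_of m. if adds_box lam mu then real (dim lam) else 0)
      = (\<Sum>lam\<in>partitions_of m. if adds_box lam mu then real (num_tableaux (cells lam)) else 0)"
    by (intro sum.cong refl) (simp add: dim_eq_num_tableaux)
  also have "\<dots> = (\<Sum>y\<in>removable (cells mu). real (num_tableaux (cells mu - {y})))"
    by (rule sum_adds_box_eq_sum_removable[OF mu])
  also have "\<dots> = real (dim mu)"
    using num_tableaux_branching[OF young_diagram_partitions_of[OF mu] \<open>cells mu \<noteq> {}\<close>]
    by (simp add: dim_eq_num_tableaux)
  finally show ?thesis .
qed

text \<open>Both the forward (Kerov) and the backward (branching) transitions preserve the Plancherel
  measure; each reduces to a sum over the edges of the Young graph.\<close>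

lemma plancherel_mean_transition_eq_edge_sum:
  "plancherel_mean m (\<lambda>lam. \<Sum>mu\<in>partitions_of (Suc m). transition m lam mu * G lam mu)
   = (\<Sum>lam\<in>partitions_of m. \<Sum>mu\<in>partitions_of (Suc m).
        if adds_box lam mu then real (dim lam) * real (dim mu) * G lam mu else 0) / fact (Suc m)"
  unfolding plancherel_mean_def sum_divide_distrib sum_distrib_left
proof (intro sum.cong refl)
  fix lam mu assume "lam \<in> partitions_of m"
  then have "real (dim lam) \<noteq> 0" using dim_pos by simp
  moreover have "fact (Suc m) = real (m + 1) * (fact m :: real)" by simp
  ultimately show "real (dim lam) ^ 2 / fact m * (transition m lam mu * G lam mu)
      = (if adds_box lam mu then real (dim lam) * real (dim mu) * G lam mu else 0) / fact (Suc m)"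
    unfolding transition_def by (simp add: power2_eq_square field_simps del: of_nat_Suc of_nat_add)
qed

lemma plancherel_mean_Suc:
  "plancherel_mean (Suc m) h = plancherel_mean m (\<lambda>lam. \<Sum>mu\<in>partitions_of (Suc m). transition m lam mu * h mu)"
proof -
  have "plancherel_mean (Suc m) h
      = (\<Sum>mu\<in>partitions_of (Suc m). \<Sum>lam\<in>partitions_of m.
          if adds_box lam mu then real (dim lam) * real (dim mu) * h mu else 0) / fact (Suc m)"
    unfolding plancherel_mean_def sum_divide_distrib[where A = "partitions_of (Suc m)"]
  proof (intro sum.cong refl)
    fix mu assume mu: "mu \<in> partitions_of (Suc m)"
    have "(\<Sum>lam\<in>partitions_of m. if adds_box lam mu then real (dim lam) * real (dim mu) * h mu else 0)
        = (\<Sum>lam\<in>partitions_of m. if adds_box lam mu then real (dim lam) else 0) * (real (dim mu) * h mu)"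
      unfolding sum_distrib_right by (intro sum.cong) auto
    then show "real (dim mu) ^ 2 / fact (Suc m) * h mu = (\<Sum>lam\<in>partitions_of m.
          if adds_box lam mu then real (dim lam) * real (dim mu) * h mu else 0) / fact (Suc m)"
      by (simp add: sum_dim_adds_box[OF mu] power2_eq_square)
  qed
  then show ?thesis
    unfolding plancherel_mean_transition_eq_edge_sum by (simp add: sum.swap[of _ "partitions_of (Suc m)"])
qed

lemma plancherel_mean_down:
  "plancherel_mean (Suc m) (\<lambda>mu. (\<Sum>lam\<in>partitions_of m. if adds_box lam mu then real (dim lam) * g lam else 0) / real (dim mu))
   = plancherel_mean m g"
proof -
  have "plancherel_mean m g = plancherel_mean m (\<lambda>lam. \<Sum>mu\<in>partitions_of (Suc m). transition m lam mu * g lam)"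
    by (intro plancherel_mean_cong) (simp add: sum_distrib_right[symmetric] sum_transition)
  also have "\<dots> = (\<Sum>mu\<in>partitions_of (Suc m). \<Sum>lam\<in>partitions_of m.
          if adds_box lam mu then real (dim lam) * g lam * real (dim mu) else 0) / fact (Suc m)"
    unfolding plancherel_mean_transition_eq_edge_sum
    by (subst sum.swap) (intro arg_cong2[where f = "(/)"] sum.cong refl, simp add: mult_ac)
  also have "\<dots> = plancherel_mean (Suc m) (\<lambda>mu. (\<Sum>lam\<in>partitions_of m. if adds_box lam mu then real (dim lam) * g lam else 0) / real (dim mu))"
    unfolding plancherel_mean_def sum_divide_distrib[where A = "partitions_of (Suc m)"]
  proof (intro sum.cong refl)
    fix mu assume "mu \<in> partitions_of (Suc m)"
    then have "real (dim mu) \<noteq> 0" using dim_pos by simp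
    moreover have "(\<Sum>lam\<in>partitions_of m. if adds_box lam mu then real (dim lam) * g lam * real (dim mu) else 0)
        = (\<Sum>lam\<in>partitions_of m. if adds_box lam mu then real (dim lam) * g lam else 0) * real (dim mu)"
      unfolding sum_distrib_right by (intro sum.cong) auto
    ultimately show "(\<Sum>lam\<in>partitions_of m. if adds_box lam mu then real (dim lam) * g lam * real (dim mu) else 0) / fact (Suc m)
      = real (dim mu) ^ 2 / fact (Suc m) * ((\<Sum>lam\<in>partitions_of m. if adds_box lam mu then real (dim lam) * g lam else 0) / real (dim mu))"
      by (simp add: power2_eq_square)
  qed
  finally show ?thesis ..
qed

lemma plancherel_mean_const: "plancherel_mean m (\<lambda>_. c) = c"
proof (induction m)
  case (Suc m)
  have "plancherel_mean (Suc m) (\<lambda>_. c) = plancherel_mean m (\<lambda>lam. \<Sum>mu\<in>partitions_of (Suc m). transition m lam mu * c)"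
    by (rule plancherel_mean_Suc)
  also have "\<dots> = plancherel_mean m (\<lambda>_. c)"
    by (rule plancherel_mean_cong) (simp add: sum_distrib_right[symmetric] sum_transition)
  finally show ?case
    using Suc.IH by simp
qed (simp add: plancherel_mean_0)

lemma sum_transition_cong:
  "(\<And>mu. adds_box lam mu \<Longrightarrow> f mu = g mu) \<Longrightarrow>
   (\<Sum>mu\<in>partitions_of (Suc m). transition m lam mu * f mu) = (\<Sum>mu\<in>partitions_of (Suc m). transition m lam mu * g mu)"
  by (intro sum.cong) (auto simp: transition_def)

lemma sum_cells_adds_box:
  "adds_box lam mu \<Longrightarrow> (\<Sum>z\<in>cells mu. g z) = g (added_box lam mu) + (\<Sum>z\<in>cells lam. g z)"
  using adds_box_cells[of lam mu] finite_cells by simp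

lemma plancherel_mean_sum_rcontent_sq:
  "plancherel_mean m (\<lambda>lam. \<Sum>z\<in>cells lam. rcontent z ^ 2) = real m * (real m - 1) / 2"
proof (induction m)
  case 0
  then show ?case by (simp add: plancherel_mean_0 cells_def)
next
  case (Suc m)
  let ?S = "\<lambda>lam. \<Sum>z\<in>cells lam. rcontent z ^ 2"
  have "(\<Sum>mu\<in>partitions_of (Suc m). transition m lam mu * ?S mu) = ?S lam + real m"
    if lam: "lam \<in> partitions_of m" for lam
  proof -
    have "(\<Sum>mu\<in>partitions_of (Suc m). transition m lam mu * ?S mu)
        = (\<Sum>mu\<in>partitions_of (Suc m). transition m lam mu * (?S lam + rcontent (added_box lam mu) ^ 2))"
      by (intro sum_transition_cong) (simp add: sum_cells_adds_box)
    also have "\<dots> = ?S lam + real m"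
      using sum_transition[OF lam] transition_mean_rcontent_sq[OF lam]
      by (simp add: distrib_left sum.distrib sum_distrib_right[symmetric] mult.commute)
    finally show ?thesis .
  qed
  then have "plancherel_mean (Suc m) ?S = plancherel_mean m (\<lambda>lam. ?S lam + real m)"
    unfolding plancherel_mean_Suc by (rule plancherel_mean_cong)
  also have "\<dots> = real m * (real m - 1) / 2 + real m"
    by (simp add: plancherel_mean_add plancherel_mean_const Suc.IH)
  finally show ?case
    by (simp add: field_simps)
qed

lemma plancherel_mean_sq_sum_rcontent:
  "plancherel_mean m (\<lambda>lam. (\<Sum>z\<in>cells lam. rcontent z) ^ 2) = real m * (real m - 1) / 2"
proof (induction m)
  case 0
  then show ?case by (simp add: plancherel_mean_0 cells_def)
next
  case (Suc m)
  let ?S = "\<lambda>lam. \<Sum>z\<in>cells lam. rcontent z"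
  have "(\<Sum>mu\<in>partitions_of (Suc m). transition m lam mu * ?S mu ^ 2) = ?S lam ^ 2 + real m"
    if lam: "lam \<in> partitions_of m" for lam
  proof -
    have "(\<Sum>mu\<in>partitions_of (Suc m). transition m lam mu * ?S mu ^ 2)
        = (\<Sum>mu\<in>partitions_of (Suc m). transition m lam mu * (?S lam ^ 2 + 2 * ?S lam * rcontent (added_box lam mu)
            + rcontent (added_box lam mu) ^ 2))"
      by (intro sum_transition_cong) (simp add: sum_cells_adds_box power2_eq_square algebra_simps)
    also have "\<dots> = ?S lam ^ 2 * (\<Sum>mu\<in>partitions_of (Suc m). transition m lam mu)
        + 2 * ?S lam * (\<Sum>mu\<in>partitions_of (Suc m). transition m lam mu * rcontent (added_box lam mu))
        + (\<Sum>mu\<in>partitions_of (Suc m). transition m lam mu * rcontent (added_box lam mu) ^ 2)"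
      by (simp add: distrib_left sum.distrib sum_distrib_left sum_distrib_right mult_ac)
    also have "\<dots> = ?S lam ^ 2 + real m"
      using sum_transition[OF lam] transition_mean_rcontent[OF lam] transition_mean_rcontent_sq[OF lam]
      by simp
    finally show ?thesis .
  qed
  then have "plancherel_mean (Suc m) (\<lambda>lam. ?S lam ^ 2) = plancherel_mean m (\<lambda>lam. ?S lam ^ 2 + real m)"
    unfolding plancherel_mean_Suc by (rule plancherel_mean_cong)
  also have "\<dots> = real m * (real m - 1) / 2 + real m"
    by (simp add: plancherel_mean_add plancherel_mean_const Suc.IH)
  finally show ?case
    by (simp add: field_simps)
qed

text \<open>Averaged over the Plancherel measure, the recursion up_sum_rec telescopes. This determines the
  mean of weights such as c^4, whose corner sums depend on more than the size of the diagram.\<close>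

lemma plancherel_mean_up_sum:
  "plancherel_mean m (\<lambda>lam. up_sum w (cells lam) / real (dim lam))
   = (\<Sum>k\<le>m. plancherel_mean k (\<lambda>lam. corner_sum w (cells lam)))"
proof (induction m)
  case 0
  show ?case
    using up_sum_rec[OF young_diagram_empty, of w]
    by (simp add: plancherel_mean_0 dim_Nil cells_def removable_empty num_tableaux_empty)
next
  case (Suc m)
  let ?g = "\<lambda>lam. up_sum w (cells lam) / real (dim lam)"
  let ?down = "\<lambda>mu. (\<Sum>lam\<in>partitions_of m. if adds_box lam mu then real (dim lam) * ?g lam else 0) / real (dim mu)"
  have "?g mu = corner_sum w (cells mu) + ?down mu" if mu: "mu \<in> partitions_of (Suc m)" for mu
  proof -
    have "(\<Sum>lam\<in>partitions_of m. if adds_box lam mu then real (dim lam) * ?g lam else 0)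
        = (\<Sum>lam\<in>partitions_of m. if adds_box lam mu then up_sum w (cells lam) else 0)"
      by (intro sum.cong refl) (auto dest: dim_pos)
    also have "\<dots> = (\<Sum>y\<in>removable (cells mu). up_sum w (cells mu - {y}))"
      by (rule sum_adds_box_eq_sum_removable[OF mu])
    finally show ?thesis
      using up_sum_rec[OF young_diagram_partitions_of[OF mu], of w] dim_pos[OF mu]
      by (simp add: dim_eq_num_tableaux field_simps)
  qed
  then have "plancherel_mean (Suc m) ?g
      = plancherel_mean (Suc m) (\<lambda>mu. corner_sum w (cells mu)) + plancherel_mean (Suc m) ?down"
    unfolding plancherel_mean_add[symmetric] by (rule plancherel_mean_cong)
  then show ?case
    unfolding plancherel_mean_down Suc.IH by simp
qed

lemma plancherel_mean_transition_rcontent_pow4: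
  "plancherel_mean m (\<lambda>lam. \<Sum>mu\<in>partitions_of (Suc m). transition m lam mu * rcontent (added_box lam mu) ^ 4)
   = real m * (2 * real m - 1)"
proof -
  let ?w = "\<lambda>x. rcontent x ^ 4"
  have corner: "plancherel_mean k (\<lambda>lam. corner_sum ?w (cells lam)) = 6 * real k * (real k - 1) + 2 * real k" for k
  proof -
    have "plancherel_mean k (\<lambda>lam. corner_sum ?w (cells lam))
        = plancherel_mean k (\<lambda>lam. 12 * (\<Sum>z\<in>cells lam. rcontent z ^ 2) + 2 * real k)"
      by (rule plancherel_mean_cong)
        (simp add: corner_sum_rcontent_pow4 young_diagram_partitions_of partitions_of_iff)
    then show ?thesis
      by (simp add: plancherel_mean_add plancherel_mean_cmult plancherel_mean_const plancherel_mean_sum_rcontent_sq)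
  qed
  have sum_corner: "(\<Sum>k\<le>m. 6 * real k * (real k - 1) + 2 * real k) = real m * (real m + 1) * (2 * real m - 1)"
    by (induction m) (simp_all add: algebra_simps)
  have "plancherel_mean m (\<lambda>lam. \<Sum>mu\<in>partitions_of (Suc m). transition m lam mu * ?w (added_box lam mu))
      = plancherel_mean m (\<lambda>lam. 1 / real (m + 1) * (up_sum ?w (cells lam) / real (dim lam)))"
    using sum_transition_eq_up_sum[of _ m ?w] by (intro plancherel_mean_cong) simp
  also have "\<dots> = real m * (2 * real m - 1)"
    unfolding plancherel_mean_cmult plancherel_mean_up_sum corner sum_corner by (simp add: field_simps)
  finally show ?thesis .
qed

section \<open>Kerov's growth process\<close>

lemma kerov_paths_0: "kerov_paths 0 = {[]}"
  unfolding kerov_paths_def by auto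

lemma kerov_paths_Suc:
  "kerov_paths (Suc m) = (\<lambda>(ps, mu). ps @ [mu]) ` (kerov_paths m \<times> partitions_of (Suc m))"
proof (intro set_eqI iffI)
  fix qs assume qs: "qs \<in> kerov_paths (Suc m)"
  then have "qs \<noteq> []" by (auto simp: kerov_paths_def)
  then obtain ps mu where qs_eq: "qs = ps @ [mu]" by (metis rev_exhaust)
  moreover have len: "length ps = m" using qs qs_eq by (simp add: kerov_paths_def)
  moreover have nth: "qs ! k \<in> partitions_of (Suc k)" if "k < Suc m" for k
    using qs that unfolding kerov_paths_def by blast
  ultimately have "ps \<in> kerov_paths m" "mu \<in> partitions_of (Suc m)"
    using nth[of m] nth[OF less_SucI] by (auto simp: kerov_paths_def nth_append)
  then show "qs \<in> (\<lambda>(ps, mu). ps @ [mu]) ` (kerov_paths m \<times> partitions_of (Suc m))"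
    using qs_eq by force
next
  fix qs assume "qs \<in> (\<lambda>(ps, mu). ps @ [mu]) ` (kerov_paths m \<times> partitions_of (Suc m))"
  then obtain ps mu where "qs = ps @ [mu]" "ps \<in> kerov_paths m" "mu \<in> partitions_of (Suc m)"
    by auto
  then show "qs \<in> kerov_paths (Suc m)"
    unfolding kerov_paths_def by (auto simp: nth_append less_Suc_eq)
qed

lemma kerov_prob_nonneg: "0 \<le> kerov_prob ps"
  unfolding kerov_prob_def by (intro prod_nonneg) auto

lemma kerov_prob_snoc:
  assumes len: "length ps = Suc k"
  shows "kerov_prob (ps @ [mu]) = kerov_prob ps * transition (Suc k) (ps ! k) mu"
proof -
  let ?F = "\<lambda>qs j. if adds_box (qs ! j) (qs ! Suc j)
      then real (dim (qs ! Suc j)) / (real (j + 2) * real (dim (qs ! j))) else 0"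
  have "kerov_prob (ps @ [mu]) = (\<Prod>j<k. ?F (ps @ [mu]) j) * ?F (ps @ [mu]) k"
    unfolding kerov_prob_def using len by simp
  also have "(\<Prod>j<k. ?F (ps @ [mu]) j) = kerov_prob ps"
    unfolding kerov_prob_def using len by (intro prod.cong) (auto simp: nth_append)
  also have "?F (ps @ [mu]) k = transition (Suc k) (ps ! k) mu"
    unfolding transition_def using len by (simp add: nth_append)
  finally show ?thesis .
qed

lemma kerov_expect_cong:
  "(\<And>ps. ps \<in> kerov_paths n \<Longrightarrow> f ps = g ps) \<Longrightarrow> kerov_expect n f = kerov_expect n g"
  unfolding kerov_expect_def by simp

lemma kerov_expect_Suc:
  "kerov_expect (Suc (Suc m)) g
   = kerov_expect (Suc m) (\<lambda>ps. \<Sum>mu\<in>partitions_of (Suc (Suc m)). transition (Suc m) (ps ! m) mu * g (ps @ [mu]))"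
proof -
  have "inj_on (\<lambda>(ps, mu). ps @ [mu]) (kerov_paths (Suc m) \<times> partitions_of (Suc (Suc m)))"
    by (auto simp: inj_on_def)
  then have "kerov_expect (Suc (Suc m)) g
      = (\<Sum>ps\<in>kerov_paths (Suc m). \<Sum>mu\<in>partitions_of (Suc (Suc m)). kerov_prob (ps @ [mu]) * g (ps @ [mu]))"
    unfolding kerov_expect_def kerov_paths_Suc[of "Suc m"]
    by (simp add: sum.reindex split_def sum.cartesian_product)
  also have "\<dots> = kerov_expect (Suc m) (\<lambda>ps. \<Sum>mu\<in>partitions_of (Suc (Suc m)). transition (Suc m) (ps ! m) mu * g (ps @ [mu]))"
    unfolding kerov_expect_def sum_distrib_left
    by (intro sum.cong refl) (simp add: kerov_prob_snoc kerov_paths_def mult.assoc)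
  finally show ?thesis .
qed

lemma dim_partitions_of_1:
  assumes "mu \<in> partitions_of 1"
  shows "dim mu = 1"
proof -
  have "card (cells mu) = 1"
    using assms by (simp add: partitions_of_iff)
  then obtain y where y: "cells mu = {y}"
    by (rule card_1_singletonE)
  have "removable {y} = {y}"
    unfolding removable_def using young_diagram_empty by auto
  then show ?thesis
    using num_tableaux_branching[of "{y}"] young_diagram_partitions_of[OF assms] y
    by (simp add: dim_eq_num_tableaux num_tableaux_empty)
qed

lemma kerov_expect_last: "kerov_expect (Suc m) (\<lambda>ps. h (ps ! m)) = plancherel_mean (Suc m) h"
proof (induction m arbitrary: h)
  case 0
  have "kerov_paths 1 = (\<lambda>mu. [mu]) ` partitions_of 1"
  proof -
    have pair: "{[]} \<times> A = Pair [] ` A" for A :: "nat list set" by auto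
    show ?thesis
      unfolding One_nat_def kerov_paths_Suc kerov_paths_0 pair image_image by simp
  qed
  then have "kerov_expect 1 (\<lambda>ps. h (ps ! 0)) = (\<Sum>mu\<in>partitions_of 1. h mu)"
    unfolding kerov_expect_def by (simp add: sum.reindex inj_on_def kerov_prob_def)
  also have "\<dots> = plancherel_mean 1 h"
    unfolding plancherel_mean_def by (simp add: dim_partitions_of_1)
  finally show ?case by simp
next
  case (Suc m)
  have "kerov_expect (Suc (Suc m)) (\<lambda>ps. h (ps ! Suc m))
      = kerov_expect (Suc m) (\<lambda>ps. (\<lambda>lam. \<Sum>mu\<in>partitions_of (Suc (Suc m)). transition (Suc m) lam mu * h mu) (ps ! m))"
    unfolding kerov_expect_Suc by (intro kerov_expect_cong) (simp add: kerov_paths_def nth_append)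
  then show ?case
    using Suc.IH[of "\<lambda>lam. \<Sum>mu\<in>partitions_of (Suc (Suc m)). transition (Suc m) lam mu * h mu"]
    by (simp add: plancherel_mean_Suc[of "Suc m"])
qed

lemma kerov_expect_last_step:
  assumes "2 \<le> n"
  shows "kerov_expect n (\<lambda>ps. G (ps ! (n - 2)) (ps ! (n - 1)))
       = plancherel_mean (n - 1) (\<lambda>lam. \<Sum>mu\<in>partitions_of n. transition (n - 1) lam mu * G lam mu)"
proof -
  obtain m where n: "n = Suc (Suc m)"
    using assms by (metis add_2_eq_Suc le_Suc_ex)
  have "kerov_expect n (\<lambda>ps. G (ps ! (n - 2)) (ps ! (n - 1)))
      = kerov_expect (Suc m) (\<lambda>ps. (\<lambda>lam. \<Sum>mu\<in>partitions_of n. transition (Suc m) lam mu * G lam mu) (ps ! m))"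
    unfolding n kerov_expect_Suc by (intro kerov_expect_cong) (simp add: kerov_paths_def nth_append)
  then show ?thesis
    using kerov_expect_last[of m "\<lambda>lam. \<Sum>mu\<in>partitions_of n. transition (Suc m) lam mu * G lam mu"]
    by (simp add: n)
qed

lemma kerov_expect_Cauchy_Schwarz:
  "kerov_expect n (\<lambda>ps. f ps * g ps) ^ 2 \<le> kerov_expect n (\<lambda>ps. f ps ^ 2) * kerov_expect n (\<lambda>ps. g ps ^ 2)"
proof -
  let ?a = "\<lambda>ps. sqrt (kerov_prob ps) * f ps" and ?b = "\<lambda>ps. sqrt (kerov_prob ps) * g ps"
  have "kerov_prob ps = sqrt (kerov_prob ps) ^ 2" for ps
    using kerov_prob_nonneg by simp
  then have "kerov_expect n (\<lambda>ps. f ps * g ps) = (\<Sum>ps\<in>kerov_paths n. ?a ps * ?b ps)"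
    "kerov_expect n (\<lambda>ps. f ps ^ 2) = (\<Sum>ps\<in>kerov_paths n. ?a ps ^ 2)"
    "kerov_expect n (\<lambda>ps. g ps ^ 2) = (\<Sum>ps\<in>kerov_paths n. ?b ps ^ 2)"
    unfolding kerov_expect_def by (simp_all add: power_mult_distrib power2_eq_square mult_ac)
  then show ?thesis
    using Cauchy_Schwarz_ineq_sum[of ?a ?b] by simp
qed

lemma real_choose_two: "real (m choose 2) = real m * (real m - 1) / 2"
  by (induction m) (simp_all add: numeral_2_eq_2 field_simps)

lemma kerov_expect_X_sq:
  assumes "2 \<le> n"
  shows "kerov_expect n (\<lambda>ps. X_of n ps ^ 2) = real (n - 1)"
proof -
  obtain m where n: "n = Suc m" using assms by (cases n) auto
  have "kerov_expect n (\<lambda>ps. X_of n ps ^ 2)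
      = plancherel_mean m (\<lambda>lam. \<Sum>mu\<in>partitions_of (Suc m). transition m lam mu * rcontent (added_box lam mu) ^ 2)"
    unfolding X_of_def using kerov_expect_last_step[OF assms] by (simp add: n)
  also have "\<dots> = plancherel_mean m (\<lambda>_. real m)"
    by (intro plancherel_mean_cong transition_mean_rcontent_sq)
  finally show ?thesis
    by (simp add: n plancherel_mean_const)
qed

lemma kerov_expect_X_pow4:
  assumes "2 \<le> n"
  shows "kerov_expect n (\<lambda>ps. X_of n ps ^ 4) = real (n - 1) * (2 * real n - 3)"
proof -
  obtain m where n: "n = Suc m" using assms by (cases n) auto
  have "kerov_expect n (\<lambda>ps. X_of n ps ^ 4)
      = plancherel_mean m (\<lambda>lam. \<Sum>mu\<in>partitions_of (Suc m). transition m lam mu * rcontent (added_box lam mu) ^ 4)"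
    unfolding X_of_def using kerov_expect_last_step[OF assms] by (simp add: n)
  then show ?thesis
    by (simp add: n plancherel_mean_transition_rcontent_pow4 algebra_simps)
qed

lemma kerov_expect_T_X_sq:
  assumes "3 \<le> n"
  shows "kerov_expect n (\<lambda>ps. (T_of n ps * X_of n ps) ^ 2) = real (n - 1)"
proof -
  obtain m where n: "n = Suc m" using assms by (cases n) auto
  define B where "B = real (m choose 2)"
  have B: "B = real m * (real m - 1) / 2" "0 < B"
    using assms by (auto simp: B_def real_choose_two n)
  let ?S = "\<lambda>lam. \<Sum>z\<in>cells lam. rcontent z"
  let ?G = "\<lambda>lam mu. ?S lam ^ 2 / B * rcontent (added_box lam mu) ^ 2"
  have "kerov_expect n (\<lambda>ps. (T_of n ps * X_of n ps) ^ 2) = kerov_expect n (\<lambda>ps. ?G (ps ! (n - 2)) (ps ! (n - 1)))"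
    unfolding T_of_def X_of_def B_def using B(2)
    by (intro kerov_expect_cong) (simp add: n B_def power_mult_distrib power_divide)
  also have "\<dots> = plancherel_mean m (\<lambda>lam. \<Sum>mu\<in>partitions_of (Suc m). transition m lam mu * ?G lam mu)"
    using kerov_expect_last_step[of n ?G] assms by (simp add: n)
  also have "\<dots> = plancherel_mean m (\<lambda>lam. real m / B * ?S lam ^ 2)"
  proof (rule plancherel_mean_cong)
    fix lam assume "lam \<in> partitions_of m"
    have "(\<Sum>mu\<in>partitions_of (Suc m). transition m lam mu * ?G lam mu)
        = ?S lam ^ 2 / B * (\<Sum>mu\<in>partitions_of (Suc m). transition m lam mu * rcontent (added_box lam mu) ^ 2)"
      by (simp add: sum_distrib_left mult_ac)
    then show "(\<Sum>mu\<in>partitions_of (Suc m). transition m lam mu * ?G lam mu) = real m / B * ?S lam ^ 2"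
      using transition_mean_rcontent_sq[OF \<open>lam \<in> partitions_of m\<close>] by simp
  qed
  also have "\<dots> = real m"
    unfolding plancherel_mean_cmult plancherel_mean_sq_sum_rcontent B(1)[symmetric] using B(2) by simp
  finally show ?thesis
    by (simp add: n)
qed

lemma kerov_expect_mult_X_sq_le:
  assumes n: "2 \<le> n" and f: "kerov_expect n (\<lambda>ps. f ps ^ 2) = real (n - 1)"
  shows "kerov_expect n (\<lambda>ps. f ps * X_of n ps ^ 2) \<le> real (n - 1) * sqrt (2 * real n - 3)"
proof (rule power2_le_imp_le)
  have "kerov_expect n (\<lambda>ps. f ps * X_of n ps ^ 2) ^ 2 \<le> real (n - 1) * (real (n - 1) * (2 * real n - 3))"
    using kerov_expect_Cauchy_Schwarz[of n f "\<lambda>ps. X_of n ps ^ 2"] f kerov_expect_X_pow4[OF n]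
    by (simp add: power_mult [symmetric])
  also have "\<dots> = (real (n - 1) * sqrt (2 * real n - 3)) ^ 2"
    using n by (simp add: power_mult_distrib power2_eq_square)
  finally show "kerov_expect n (\<lambda>ps. f ps * X_of n ps ^ 2) ^ 2 \<le> (real (n - 1) * sqrt (2 * real n - 3)) ^ 2" .
qed (use n in simp)

theorem lemma4:
  fixes n :: nat
  assumes "n \<ge> 3"
  shows "kerov_expect n (\<lambda>ps. \<bar>X_of n ps\<bar> ^ 3) \<le> real (n - 1) * sqrt (2 * real n - 3)
       \<and> kerov_expect n (\<lambda>ps. \<bar>T_of n ps\<bar> * \<bar>X_of n ps\<bar> ^ 3) \<le> real (n - 1) * sqrt (2 * real n - 3)"
proof -
  have "\<bar>x\<bar> ^ 3 = \<bar>x\<bar> * x ^ 2" for x :: real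
    by (simp add: power3_eq_cube power2_eq_square)
  moreover have "kerov_expect n (\<lambda>ps. \<bar>X_of n ps\<bar> ^ 2) = real (n - 1)"
    using kerov_expect_X_sq assms by simp
  moreover have "kerov_expect n (\<lambda>ps. (\<bar>T_of n ps\<bar> * \<bar>X_of n ps\<bar>) ^ 2) = real (n - 1)"
    using kerov_expect_T_X_sq[OF assms] by (simp add: power_mult_distrib)
  ultimately show ?thesis
    using kerov_expect_mult_X_sq_le[of n "\<lambda>ps. \<bar>X_of n ps\<bar>"]
      kerov_expect_mult_X_sq_le[of n "\<lambda>ps. \<bar>T_of n ps\<bar> * \<bar>X_of n ps\<bar>"] assms
    by (simp add: mult.assoc)
qed

end
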